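(* Let $B$ and $T$ be disjoint finite sets with a bijection $b\mapsto \bar b$ from $B$ to $T$, let $A$ be a $B\times T$ matrix over $GF(2)$ with $A_{b,\bar b}=0$ for all $b\in B$, and let $E=(I\mid A)$ be the $B\times(B\cup T)$ matrix whose $B$-columns form the identity and whose $T$-columns form $A$. Let $M$ be the column matroid of $E$ and $\Omega=\{\{b,\bar b\}: b\in B\}$. Then $(M,\Omega)$ is a $2$-sheltering matroid if and only if $A$ is symmetric, i.e. $A_{b,\bar c}=A_{c,\bar b}$ for all $b,c\in B$.
   Context: A sheltering matroid is a pair $(M,\Omega)$ where $M$ is a matroid on a finite set $U$ and $\Omega$ a partition of $U$ such that for every independent set $I$ of $M$ meeting each class of $\Omega$ in at most one element, and every $2$-element subset $\{x,y\}$ of a class $\omega$ with $\omega\cap I=\emptyset$, $I\cup\{x\}$ or $I\cup\{y\}$ is independent in $M$. It is a $2$-sheltering matroid if all classes have size $2$. *)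

theory Defs
  imports Main "HOL-Library.Z2"
begin

definition matroid :: "'a set \<Rightarrow> ('a set \<Rightarrow> bool) \<Rightarrow> bool" where
  "matroid U indep \<longleftrightarrow>
     finite U \<and>
     (\<forall>I. indep I \<longrightarrow> I \<subseteq> U) \<and>
     indep {} \<and>
     (\<forall>I J. indep J \<and> I \<subseteq> J \<longrightarrow> indep I) \<and>
     (\<forall>I J. indep I \<and> indep J \<and> card I < card J \<longrightarrow> (\<exists>x \<in> J - I. indep (insert x I)))"

definition is_partition :: "'a set \<Rightarrow> 'a set set \<Rightarrow> bool" where
  "is_partition U \<Omega> \<longleftrightarrow>
     \<Union>\<Omega> = U \<and> {} \<notin> \<Omega> \<and>
     (\<forall>\<omega>1 \<in> \<Omega>. \<forall>\<omega>2 \<in> \<Omega>. \<omega>1 \<noteq> \<omega>2 \<longrightarrow> \<omega>1 \<inter> \<omega>2 = {})"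

definition sheltering_matroid :: "'a set \<Rightarrow> ('a set \<Rightarrow> bool) \<Rightarrow> 'a set set \<Rightarrow> bool" where
  "sheltering_matroid U indep \<Omega> \<longleftrightarrow>
     matroid U indep \<and> is_partition U \<Omega> \<and>
     (\<forall>I. indep I \<and> (\<forall>\<omega> \<in> \<Omega>. card (\<omega> \<inter> I) \<le> 1) \<longrightarrow>
        (\<forall>\<omega> \<in> \<Omega>. \<omega> \<inter> I = {} \<longrightarrow>
           (\<forall>x y. x \<in> \<omega> \<and> y \<in> \<omega> \<and> x \<noteq> y \<longrightarrow>
              indep (insert x I) \<or> indep (insert y I))))"

definition two_sheltering_matroid :: "'a set \<Rightarrow> ('a set \<Rightarrow> bool) \<Rightarrow> 'a set set \<Rightarrow> bool" where
  "two_sheltering_matroid U indep \<Omega> \<longleftrightarrow>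
     sheltering_matroid U indep \<Omega> \<and> (\<forall>\<omega> \<in> \<Omega>. card \<omega> = 2)"

definition column_indep :: "'r set \<Rightarrow> 'c set \<Rightarrow> ('r \<Rightarrow> 'c \<Rightarrow> 'k::field) \<Rightarrow> 'c set \<Rightarrow> bool" where
  "column_indep R U E S \<longleftrightarrow> S \<subseteq> U \<and>
     (\<forall>c :: 'c \<Rightarrow> 'k. (\<forall>r \<in> R. (\<Sum>x\<in>S. c x * E r x) = 0) \<longrightarrow> (\<forall>x \<in> S. c x = 0))"

definition id_A_matrix :: "'a set \<Rightarrow> ('a \<Rightarrow> 'a \<Rightarrow> bit) \<Rightarrow> 'a \<Rightarrow> 'a \<Rightarrow> bit" where
  "id_A_matrix B A b x = (if x \<in> B then (if x = b then 1 else 0) else A b x)"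

end

theory Submission
  imports Defs "HOL-Library.Function_Algebras" "HOL.Vector_Spaces"
begin

text \<open>Column matroids are matroids by the Steinitz exchange lemma, so only the sheltering
  condition is at stake. Let \<open>I\<close> be independent, meet every pair \<open>{c, bar c}\<close> at most once and
  miss \<open>{b, bar b}\<close>. If \<open>I + b\<close> and \<open>I + bar b\<close> are both dependent, then \<open>e_b\<close> and the
  column of \<open>bar b\<close> are combinations of columns of \<open>I\<close>. With \<open>Y = {y \<in> B. bar y \<in> I}\<close>, no
  row in \<open>Y + b\<close> lies in \<open>I\<close>, so on these rows the combinations read \<open>l S = e_b\<close> and
  \<open>m S = S_b\<close> for \<open>S_{ij} = A_{i, bar j}\<close> and coefficient vectors \<open>l, m\<close> on \<open>Y\<close>. For
  symmetric \<open>A\<close> this is impossible: \<open>1 = l \<bullet> S_b = l \<bullet> (m S) = m \<bullet> (l S) = 0\<close>.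
  Conversely, if \<open>A_{b, bar c} = 1\<close> and \<open>A_{c, bar b} = 0\<close>, then \<open>I = (B - {b, c}) + bar c\<close>
  is such an independent set, while \<open>I + b \<supseteq> (B - {c}) + bar c\<close> and
  \<open>I + bar b \<supseteq> (B - {b, c}) + bar b\<close> are dependent because \<open>A_{c, bar c} = A_{b, bar b} = 0\<close>.\<close>

text \<open>HOL-Library.Z2 rewrites \<open>+\<close> and \<open>*\<close> on \<open>bit\<close> to \<open>XOR\<close> and \<open>AND\<close> by default, which
  destroys the ring normal forms used below.\<close>
declare add_bit_eq_xor [simp del] mult_bit_eq_and [simp del]

lemma sum_fun_apply: "finite S \<Longrightarrow> (\<Sum>x\<in>S. f x) r = (\<Sum>x\<in>S. f x r)"
  by (induction S rule: finite_induct) auto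

interpretation fun_vector: vector_space "\<lambda>(a::'k::field) (f::'r \<Rightarrow> 'k) r. a * f r"
  by unfold_locales (auto simp: fun_eq_iff algebra_simps)

definition column :: "'r set \<Rightarrow> ('r \<Rightarrow> 'c \<Rightarrow> 'k::field) \<Rightarrow> 'c \<Rightarrow> 'r \<Rightarrow> 'k" where
  "column R E x = (\<lambda>r. if r \<in> R then E r x else 0)"

lemma sum_scaled_columns:
  "finite S \<Longrightarrow> (\<Sum>x\<in>S. (\<lambda>r. c x * column R E x r)) =
     (\<lambda>r. if r \<in> R then \<Sum>x\<in>S. c x * E r x else 0)"
  by (auto simp: fun_eq_iff sum_fun_apply column_def)

lemma column_indep_finite: "column_indep R U E S \<Longrightarrow> finite U \<Longrightarrow> finite S"
  unfolding column_indep_def by (meson finite_subset)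

lemma column_indep_combination_zero:
  fixes E :: "'r \<Rightarrow> 'c \<Rightarrow> 'k::field"
  assumes "column_indep R U E S" "finite S"
    and "(\<Sum>x\<in>S. (\<lambda>r. c x * column R E x r)) = 0" "x \<in> S"
  shows "c x = 0"
proof -
  have "\<forall>r\<in>R. (\<Sum>x\<in>S. c x * E r x) = 0"
    using assms(3) by (simp add: sum_scaled_columns[OF assms(2)] fun_eq_iff split: if_splits)
  then show ?thesis using assms(1,4) by (simp add: column_indep_def)
qed

lemma column_indep_imp_independent:
  fixes E :: "'r \<Rightarrow> 'c \<Rightarrow> 'k::field"
  assumes ind: "column_indep R U E S" and fin: "finite S"
  shows "inj_on (column R E) S" and "fun_vector.independent (column R E ` S)"
proof -
  show inj: "inj_on (column R E) S"
  proof (rule inj_onI, rule ccontr)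
    fix x y assume xy: "x \<in> S" "y \<in> S" "column R E x = column R E y" "x \<noteq> y"
    define c :: "'c \<Rightarrow> 'k" where "c z = (if z = x then 1 else if z = y then -1 else 0)" for z
    have "(\<Sum>z\<in>S. (\<lambda>r. c z * column R E z r)) = (\<Sum>z\<in>{x, y}. (\<lambda>r. c z * column R E z r))"
      using fin xy by (intro sum.mono_neutral_right) (auto simp: c_def)
    also have "\<dots> = 0" using xy by (simp add: c_def fun_eq_iff)
    finally have "c x = 0" using column_indep_combination_zero[OF ind fin] xy(1) by blast
    then show False by (simp add: c_def)
  qed
  show "fun_vector.independent (column R E ` S)"
  proof
    assume "fun_vector.dependent (column R E ` S)"
    then obtain u where u: "\<exists>v\<in>column R E ` S. u v \<noteq> 0"
        "(\<Sum>v\<in>column R E ` S. (\<lambda>r. u v * v r)) = 0"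
      using fun_vector.dependent_finite fin by blast
    then have "(\<Sum>x\<in>S. (\<lambda>r. u (column R E x) * column R E x r)) = 0"
      by (simp add: sum.reindex[OF inj])
    then show False
      using u(1) column_indep_combination_zero[OF ind fin] by fastforce
  qed
qed

lemma column_indep_subset:
  fixes E :: "'r \<Rightarrow> 'c \<Rightarrow> 'k::field"
  assumes ind: "column_indep R U E J" and "I \<subseteq> J" and "finite J"
  shows "column_indep R U E I"
  unfolding column_indep_def
proof (intro conjI allI impI)
  show "I \<subseteq> U" using assms by (auto simp: column_indep_def)
  fix c :: "'c \<Rightarrow> 'k" assume h: "\<forall>r\<in>R. (\<Sum>x\<in>I. c x * E r x) = 0"
  define c' where "c' x = (if x \<in> I then c x else 0)" for x
  have "(\<Sum>x\<in>J. c' x * E r x) = (\<Sum>x\<in>I. c x * E r x)" for r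
    using assms by (intro sum.mono_neutral_cong_right) (auto simp: c'_def)
  then have "\<forall>x\<in>J. c' x = 0" using h ind by (simp add: column_indep_def)
  then show "\<forall>x\<in>I. c x = 0" using \<open>I \<subseteq> J\<close> by (force simp: c'_def)
qed

lemma column_dependent_insert_iff:
  fixes E :: "'r \<Rightarrow> 'c \<Rightarrow> 'k::field"
  assumes ind: "column_indep R U E I" and "finite I" and "x \<in> U" and "x \<notin> I"
  shows "\<not> column_indep R U E (insert x I) \<longleftrightarrow> (\<exists>c. \<forall>r\<in>R. E r x = (\<Sum>z\<in>I. c z * E r z))"
proof
  have IU: "insert x I \<subseteq> U" using assms by (auto simp: column_indep_def)
  assume "\<not> column_indep R U E (insert x I)"
  then obtain c where c: "\<forall>r\<in>R. c x * E r x + (\<Sum>z\<in>I. c z * E r z) = 0"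
      and nz: "\<exists>z\<in>insert x I. c z \<noteq> 0"
    using IU assms by (auto simp: column_indep_def)
  have "c x \<noteq> 0"
    using c nz ind by (auto simp: column_indep_def)
  then have "\<forall>r\<in>R. E r x = (\<Sum>z\<in>I. (- c z / c x) * E r z)"
    using c by (simp add: sum_divide_distrib[symmetric] sum_negf field_simps add_eq_0_iff)
  then show "\<exists>c. \<forall>r\<in>R. E r x = (\<Sum>z\<in>I. c z * E r z)"
    by (rule exI[of _ "\<lambda>z. - c z / c x"])
next
  assume "\<exists>c. \<forall>r\<in>R. E r x = (\<Sum>z\<in>I. c z * E r z)"
  then obtain c where c: "\<forall>r\<in>R. E r x = (\<Sum>z\<in>I. c z * E r z)" ..
  let ?c = "c(x := -1)"
  have "(\<Sum>z\<in>I. ?c z * E r z) = (\<Sum>z\<in>I. c z * E r z)" for r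
    using \<open>x \<notin> I\<close> by (intro sum.cong) auto
  then have "\<forall>r\<in>R. (\<Sum>z\<in>insert x I. ?c z * E r z) = 0"
    using c assms by simp
  then show "\<not> column_indep R U E (insert x I)"
    unfolding column_indep_def by force
qed

lemma matroid_column_indep:
  fixes E :: "'r \<Rightarrow> 'c \<Rightarrow> 'k::field"
  assumes fin: "finite U"
  shows "matroid U (column_indep R U E)"
  unfolding matroid_def
proof (intro conjI allI impI)
  show "column_indep R U E I" if "column_indep R U E J \<and> I \<subseteq> J" for I J
    using that column_indep_subset column_indep_finite fin by blast
  fix I J assume "column_indep R U E I \<and> column_indep R U E J \<and> card I < card J"
  then have I: "column_indep R U E I" and J: "column_indep R U E J" and card: "card I < card J"
    by auto
  have finI: "finite I" and finJ: "finite J" using I J fin column_indep_finite by blast+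
  show "\<exists>x\<in>J - I. column_indep R U E (insert x I)"
  proof (rule ccontr)
    assume none: "\<not> (\<exists>x\<in>J - I. column_indep R U E (insert x I))"
    have "column R E x \<in> fun_vector.span (column R E ` I)" if "x \<in> J" for x
    proof (cases "x \<in> I")
      case True
      then show ?thesis by (intro fun_vector.span_base imageI)
    next
      case False
      have "x \<in> U" using J \<open>x \<in> J\<close> by (auto simp: column_indep_def)
      then obtain c where c: "\<forall>r\<in>R. E r x = (\<Sum>z\<in>I. c z * E r z)"
        using none \<open>x \<in> J\<close> False column_dependent_insert_iff[OF I finI] by blast
      then have "column R E x = (\<Sum>z\<in>I. (\<lambda>r. c z * column R E z r))"
        unfolding sum_scaled_columns[OF finI] by (auto simp: column_def)
      then show ?thesis
        by (simp add: fun_vector.span_sum fun_vector.span_scale fun_vector.span_base)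
    qed
    then have "column R E ` J \<subseteq> fun_vector.span (column R E ` I)"
      by blast
    then have "card (column R E ` J) \<le> card (column R E ` I)"
      using fun_vector.independent_span_bound[OF finite_imageI[OF finI]]
        column_indep_imp_independent(2)[OF J finJ] by blast
    also have "\<dots> \<le> card I" using finI by (rule card_image_le)
    finally show False
      using card_image[OF column_indep_imp_independent(1)[OF J finJ]] card by linarith
  qed
qed (use fin in \<open>auto simp: column_indep_def\<close>)

lemma symmetric_system_inconsistent:
  fixes S :: "'i \<Rightarrow> 'i \<Rightarrow> 'k::comm_semiring_1"
  assumes "b \<notin> Y"
    and symmetric: "\<And>i j. i \<in> insert b Y \<Longrightarrow> j \<in> insert b Y \<Longrightarrow> S i j = S j i"
    and l: "\<And>i. i \<in> insert b Y \<Longrightarrow> (\<Sum>y\<in>Y. l y * S i y) = (if i = b then 1 else 0)"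
    and m: "\<And>i. i \<in> Y \<Longrightarrow> (\<Sum>y\<in>Y. m y * S i y) = S i b"
  shows False
proof -
  have "1 = (\<Sum>y\<in>Y. l y * S b y)" using l[of b] by simp
  also have "\<dots> = (\<Sum>y\<in>Y. l y * (\<Sum>y'\<in>Y. m y' * S y y'))"
    using symmetric[of b] m by (intro sum.cong) auto
  also have "\<dots> = (\<Sum>y\<in>Y. \<Sum>y'\<in>Y. m y' * (l y * S y' y))"
    using symmetric by (intro sum.cong refl) (auto simp: sum_distrib_left mult.left_commute)
  also have "\<dots> = (\<Sum>y'\<in>Y. m y' * (\<Sum>y\<in>Y. l y * S y' y))"
    by (subst sum.swap) (simp add: sum_distrib_left)
  also have "\<dots> = 0"
    using l \<open>b \<notin> Y\<close> by (intro sum.neutral) auto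
  finally show False by simp
qed

lemma sum_id_A_matrix_row:
  assumes "finite I" and "r \<in> B"
  shows "(\<Sum>x\<in>I. f x * id_A_matrix B A r x) = (if r \<in> I then f r else 0) + (\<Sum>t\<in>I - B. f t * A r t)"
proof -
  have "(\<Sum>x\<in>I \<inter> B. f x * id_A_matrix B A r x) = (\<Sum>x\<in>I \<inter> B. if r = x then f x else 0)"
    by (intro sum.cong) (auto simp: id_A_matrix_def)
  also have "\<dots> = (if r \<in> I then f r else 0)"
    using assms by simp
  finally have "(\<Sum>x\<in>I \<inter> B. f x * id_A_matrix B A r x) = (if r \<in> I then f r else 0)" .
  moreover have "(\<Sum>x\<in>I - B. f x * id_A_matrix B A r x) = (\<Sum>t\<in>I - B. f t * A r t)"
    by (intro sum.cong) (auto simp: id_A_matrix_def)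
  ultimately show ?thesis
    by (simp only: sum.Int_Diff[OF assms(1), of _ B])
qed

lemma column_indep_id_A_matrix_subset:
  assumes "finite B" and "S \<subseteq> B"
  shows "column_indep B (B \<union> T) (id_A_matrix B A) S"
  unfolding column_indep_def
proof (intro conjI allI impI ballI)
  show "S \<subseteq> B \<union> T" using assms by blast
  have "finite S" and "S - B = {}" using assms finite_subset by auto
  fix c x assume "\<forall>r\<in>B. (\<Sum>x\<in>S. c x * id_A_matrix B A r x) = 0" and "x \<in> S"
  then show "c x = 0"
    using assms sum_id_A_matrix_row[OF \<open>finite S\<close>, of x B c A, unfolded \<open>S - B = {}\<close>] by auto
qed

lemma id_A_matrix_dependent_insert:
  assumes "finite B" and "S \<subseteq> B" and "t \<in> T" and "t \<notin> B"
    and "\<And>r. r \<in> B - S \<Longrightarrow> A r t = 0"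
  shows "\<not> column_indep B (B \<union> T) (id_A_matrix B A) (insert t S)"
proof -
  have "finite S" and "S - B = {}" using assms finite_subset by auto
  have "id_A_matrix B A r t = (\<Sum>z\<in>S. A z t * id_A_matrix B A r z)" if "r \<in> B" for r
    using assms that sum_id_A_matrix_row[OF \<open>finite S\<close> that, of "\<lambda>z. A z t", unfolded \<open>S - B = {}\<close>]
    by (auto simp: id_A_matrix_def)
  moreover have "t \<in> B \<union> T" and "t \<notin> S" using assms by auto
  ultimately show ?thesis
    by (subst column_dependent_insert_iff[OF column_indep_id_A_matrix_subset[OF assms(1,2)] \<open>finite S\<close>])
      auto
qed

lemma id_A_matrix_unsheltered_pair:
  fixes A :: "'a \<Rightarrow> 'a \<Rightarrow> bit"
  assumes "finite B" and "B \<inter> T = {}" and "bij_betw bar B T"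
    and diag: "\<forall>b\<in>B. A b (bar b) = 0"
    and "b \<in> B" and "c \<in> B" and "A b (bar c) \<noteq> 0" and "A c (bar b) = 0"
  defines "ind \<equiv> column_indep B (B \<union> T) (id_A_matrix B A)"
  shows "\<exists>I. ind I \<and> (\<forall>\<omega>\<in>(\<lambda>b. {b, bar b}) ` B. card (\<omega> \<inter> I) \<le> 1) \<and> {b, bar b} \<inter> I = {}
           \<and> \<not> ind (insert b I) \<and> \<not> ind (insert (bar b) I)"
proof -
  have barT: "bar d \<in> T" "bar d \<notin> B" if "d \<in> B" for d
    using assms that by (auto simp: bij_betw_def)
  have bar_inj: "bar d = bar e \<longleftrightarrow> d = e" if "d \<in> B" "e \<in> B" for d e
    using assms that by (auto simp: bij_betw_def inj_on_def)
  have "b \<noteq> c" using assms by auto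
  define I where "I = insert (bar c) (B - {b, c})"
  have "ind I"
  proof -
    have indS: "ind (B - {b, c})" and finS: "finite (B - {b, c})"
      unfolding ind_def using column_indep_id_A_matrix_subset[OF \<open>finite B\<close>] assms by auto
    have no_rep: "\<not> (\<exists>f. \<forall>r\<in>B. id_A_matrix B A r (bar c) = (\<Sum>z\<in>B - {b, c}. f z * id_A_matrix B A r z))"
    proof
      assume "\<exists>f. \<forall>r\<in>B. id_A_matrix B A r (bar c) = (\<Sum>z\<in>B - {b, c}. f z * id_A_matrix B A r z)"
      then obtain f where "id_A_matrix B A b (bar c) = (\<Sum>z\<in>B - {b, c}. f z * id_A_matrix B A b z)"
        using \<open>b \<in> B\<close> by blast
      also have "\<dots> = 0" by (intro sum.neutral) (auto simp: id_A_matrix_def)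
      finally show False using assms barT by (simp add: id_A_matrix_def)
    qed
    have "bar c \<in> B \<union> T" and "bar c \<notin> B - {b, c}" using barT \<open>c \<in> B\<close> by auto
    from column_dependent_insert_iff[OF indS[unfolded ind_def] finS this] no_rep show ?thesis
      unfolding I_def ind_def by blast
  qed
  moreover have "card (\<omega> \<inter> I) \<le> 1" if \<omega>: "\<omega> \<in> (\<lambda>b. {b, bar b}) ` B" for \<omega>
  proof -
    obtain d where d: "d \<in> B" "\<omega> = {d, bar d}" using \<omega> by blast
    have "\<omega> \<inter> I \<subseteq> (if d = c then {bar c} else {d})"
      using d barT bar_inj \<open>c \<in> B\<close> by (auto simp: I_def)
    then have "card (\<omega> \<inter> I) \<le> card (if d = c then {bar c} else {d})"
      by (intro card_mono) auto
    then show ?thesis by (simp split: if_splits)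
  qed
  moreover have "{b, bar b} \<inter> I = {}"
    using assms barT bar_inj \<open>b \<noteq> c\<close> by (auto simp: I_def)
  moreover have "\<not> ind (insert b I)"
  proof -
    have "insert b I = insert (bar c) (B - {c})" using \<open>b \<in> B\<close> \<open>b \<noteq> c\<close> by (auto simp: I_def)
    then show ?thesis
      unfolding ind_def using id_A_matrix_dependent_insert[of B "B - {c}" "bar c" T A] assms barT by auto
  qed
  moreover have "\<not> ind (insert (bar b) I)"
  proof
    assume "ind (insert (bar b) I)"
    moreover have "insert (bar b) (B - {b, c}) \<subseteq> insert (bar b) I" by (auto simp: I_def)
    moreover have "finite (insert (bar b) I)" using assms by (simp add: I_def)
    ultimately have "ind (insert (bar b) (B - {b, c}))"
      unfolding ind_def by (rule column_indep_subset)
    then show False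
      unfolding ind_def using id_A_matrix_dependent_insert[of B "B - {b, c}" "bar b" T A] assms barT by auto
  qed
  ultimately show ?thesis by blast
qed

lemma id_A_matrix_sheltered_if_symmetric:
  fixes A :: "'a \<Rightarrow> 'a \<Rightarrow> bit"
  assumes "finite B" and "finite T" and "B \<inter> T = {}" and "bij_betw bar B T"
    and symmetric: "\<forall>b\<in>B. \<forall>c\<in>B. A b (bar c) = A c (bar b)"
    and ind: "column_indep B (B \<union> T) (id_A_matrix B A) I"
    and transversal: "\<forall>\<omega>\<in>(\<lambda>b. {b, bar b}) ` B. card (\<omega> \<inter> I) \<le> 1"
    and "b \<in> B" and "{b, bar b} \<inter> I = {}"
  shows "column_indep B (B \<union> T) (id_A_matrix B A) (insert b I)
    \<or> column_indep B (B \<union> T) (id_A_matrix B A) (insert (bar b) I)"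
proof (rule ccontr)
  let ?E = "id_A_matrix B A"
  assume dependent: "\<not> ?thesis"
  have barT: "bar d \<in> T" "bar d \<notin> B" if "d \<in> B" for d
    using assms that by (auto simp: bij_betw_def)
  have finI: "finite I" and IU: "I \<subseteq> B \<union> T"
    using ind column_indep_finite assms by (auto simp: column_indep_def)
  obtain l where l: "\<forall>r\<in>B. ?E r b = (\<Sum>z\<in>I. l z * ?E r z)"
    using dependent column_dependent_insert_iff[OF ind finI, of b] assms by auto
  obtain m where m: "\<forall>r\<in>B. ?E r (bar b) = (\<Sum>z\<in>I. m z * ?E r z)"
    using dependent column_dependent_insert_iff[OF ind finI, of "bar b"] assms barT by auto
  define Y where "Y = {y\<in>B. bar y \<in> I}"
  have "I - B = bar ` Y" and "inj_on bar Y"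
    using IU assms by (auto simp: Y_def bij_betw_def intro: inj_on_subset)
  then have row: "(\<Sum>z\<in>I. f z * ?E r z) = (\<Sum>y\<in>Y. f (bar y) * A r (bar y))"
    if "r \<in> B" "r \<notin> I" for f r
    using sum_id_A_matrix_row[OF finI that(1)] that(2) by (simp add: sum.reindex)
  have Y_disjoint: "y \<notin> I" if "y \<in> Y" for y
  proof
    assume "y \<in> I"
    then have "{y, bar y} \<inter> I = {y, bar y}" using that by (auto simp: Y_def)
    moreover have "bar y \<noteq> y" using that barT(2)[of y] by (force simp: Y_def)
    ultimately show False using transversal that by (force simp: Y_def)
  qed
  have "b \<notin> Y" using assms by (auto simp: Y_def)
  have "insert b Y \<subseteq> B" using \<open>b \<in> B\<close> by (auto simp: Y_def)
  then have sym_Y: "A i (bar j) = A j (bar i)" if "i \<in> insert b Y" "j \<in> insert b Y" for i j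
    using symmetric that by blast
  have l_Y: "(\<Sum>y\<in>Y. l (bar y) * A i (bar y)) = (if i = b then 1 else 0)" if "i \<in> insert b Y" for i
  proof -
    have "i \<in> B" and "i \<notin> I"
      using that Y_disjoint[of i] \<open>b \<in> B\<close> \<open>{b, bar b} \<inter> I = {}\<close> by (auto simp: Y_def)
    then have "(\<Sum>y\<in>Y. l (bar y) * A i (bar y)) = (\<Sum>z\<in>I. l z * ?E i z)"
      by (intro row[symmetric])
    also have "\<dots> = ?E i b" using l \<open>i \<in> B\<close> by simp
    also have "\<dots> = (if i = b then 1 else 0)" using \<open>b \<in> B\<close> by (auto simp: id_A_matrix_def)
    finally show ?thesis .
  qed
  have m_Y: "(\<Sum>y\<in>Y. m (bar y) * A i (bar y)) = A i (bar b)" if "i \<in> Y" for i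
  proof -
    have "i \<in> B" and "i \<notin> I" using that Y_disjoint[of i] by (auto simp: Y_def)
    then have "(\<Sum>y\<in>Y. m (bar y) * A i (bar y)) = (\<Sum>z\<in>I. m z * ?E i z)"
      by (intro row[symmetric])
    also have "\<dots> = ?E i (bar b)" using m \<open>i \<in> B\<close> by simp
    also have "\<dots> = A i (bar b)" using barT(2)[OF \<open>b \<in> B\<close>] by (simp add: id_A_matrix_def)
    finally show ?thesis .
  qed
  show False
    using symmetric_system_inconsistent[where S = "\<lambda>i j. A i (bar j)", OF \<open>b \<notin> Y\<close> sym_Y l_Y m_Y] .
qed

lemma is_partition_pairs:
  assumes "B \<inter> T = {}" and "bij_betw bar B T"
  shows "is_partition (B \<union> T) ((\<lambda>b. {b, bar b}) ` B)"
  unfolding is_partition_def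
proof (intro conjI ballI impI)
  show "\<Union> ((\<lambda>b. {b, bar b}) ` B) = B \<union> T"
    using assms by (auto simp: bij_betw_def)
  show "{} \<notin> (\<lambda>b. {b, bar b}) ` B" by auto
  fix \<omega>1 \<omega>2 assume "\<omega>1 \<in> (\<lambda>b. {b, bar b}) ` B" "\<omega>2 \<in> (\<lambda>b. {b, bar b}) ` B" "\<omega>1 \<noteq> \<omega>2"
  then obtain b c where "b \<in> B" "c \<in> B" "\<omega>1 = {b, bar b}" "\<omega>2 = {c, bar c}" "b \<noteq> c"
    by auto
  then show "\<omega>1 \<inter> \<omega>2 = {}"
    using assms by (auto simp: bij_betw_def inj_on_def)
qed

lemma id_A_matrix_shelters_iff_symmetric:
  fixes A :: "'a \<Rightarrow> 'a \<Rightarrow> bit"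
  assumes "finite B" and "finite T" and "B \<inter> T = {}" and "bij_betw bar B T"
    and diag: "\<forall>b\<in>B. A b (bar b) = 0"
  defines "ind \<equiv> column_indep B (B \<union> T) (id_A_matrix B A)" and "\<Omega> \<equiv> (\<lambda>b. {b, bar b}) ` B"
  shows "(\<forall>I. ind I \<and> (\<forall>\<omega>\<in>\<Omega>. card (\<omega> \<inter> I) \<le> 1) \<longrightarrow>
            (\<forall>\<omega>\<in>\<Omega>. \<omega> \<inter> I = {} \<longrightarrow>
              (\<forall>x y. x \<in> \<omega> \<and> y \<in> \<omega> \<and> x \<noteq> y \<longrightarrow> ind (insert x I) \<or> ind (insert y I))))
    \<longleftrightarrow> (\<forall>b\<in>B. \<forall>c\<in>B. A b (bar c) = A c (bar b))"
    (is "?shelters \<longleftrightarrow> ?symmetric")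
proof
  assume ?symmetric
  show ?shelters
  proof (intro allI impI ballI)
    fix I \<omega> x y
    assume "ind I \<and> (\<forall>\<omega>\<in>\<Omega>. card (\<omega> \<inter> I) \<le> 1)" and "\<omega> \<in> \<Omega>" and "\<omega> \<inter> I = {}"
      and "x \<in> \<omega> \<and> y \<in> \<omega> \<and> x \<noteq> y"
    moreover obtain b where "b \<in> B" and "\<omega> = {b, bar b}" using \<open>\<omega> \<in> \<Omega>\<close> by (auto simp: \<Omega>_def)
    ultimately show "ind (insert x I) \<or> ind (insert y I)"
      using id_A_matrix_sheltered_if_symmetric[OF assms(1-4) \<open>?symmetric\<close>, of I b]
      unfolding ind_def \<Omega>_def by auto
  qed
next
  assume shelters: ?shelters
  have "A b (bar c) = A c (bar b)" if bc: "b \<in> B" "c \<in> B" "A c (bar b) = 0" for b c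
  proof (rule ccontr)
    assume "A b (bar c) \<noteq> A c (bar b)"
    then obtain I where "ind I" "\<forall>\<omega>\<in>\<Omega>. card (\<omega> \<inter> I) \<le> 1" "{b, bar b} \<inter> I = {}"
        "\<not> ind (insert b I)" "\<not> ind (insert (bar b) I)"
      using id_A_matrix_unsheltered_pair[where A = A and bar = bar, OF assms(1,3,4) diag bc(1,2)] bc(3)
      unfolding ind_def \<Omega>_def by auto
    moreover have "{b, bar b} \<in> \<Omega>" and "b \<noteq> bar b"
      using bc assms(3,4) by (auto simp: \<Omega>_def bij_betw_def)
    ultimately show False using shelters by blast
  qed
  \<comment> \<open>Two distinct bits are \<open>0\<close> and \<open>1\<close>, so one of the two orders of \<open>b, c\<close> applies.\<close>
  then show ?symmetric
    by (metis bit_not_zero_iff)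
qed

theorem lemma2p6:
  fixes B T :: "'a set" and bar :: "'a \<Rightarrow> 'a" and A :: "'a \<Rightarrow> 'a \<Rightarrow> bit"
  assumes "finite B" and "finite T" and "B \<inter> T = {}"
    and "bij_betw bar B T"
    and "\<forall>b \<in> B. A b (bar b) = 0"
  shows "two_sheltering_matroid (B \<union> T) (column_indep B (B \<union> T) (id_A_matrix B A))
           ((\<lambda>b. {b, bar b}) ` B)
         \<longleftrightarrow> (\<forall>b \<in> B. \<forall>c \<in> B. A b (bar c) = A c (bar b))"
proof -
  have "matroid (B \<union> T) (column_indep B (B \<union> T) (id_A_matrix B A))"
    using assms by (intro matroid_column_indep) simp
  moreover have "is_partition (B \<union> T) ((\<lambda>b. {b, bar b}) ` B)"
    using assms(3,4) by (rule is_partition_pairs)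
  moreover have "card {b, bar b} = 2" if "b \<in> B" for b
  proof -
    have "b \<noteq> bar b" using that assms(3,4) by (auto simp: bij_betw_def)
    then show ?thesis by simp
  qed
  ultimately show ?thesis
    unfolding two_sheltering_matroid_def sheltering_matroid_def
    using id_A_matrix_shelters_iff_symmetric[where A = A, OF assms] by auto
qed

end
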